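(* Let $M,N$ be weight sequences satisfying $m_k^{1/k}\to\infty$ and $n_k^{1/k}\to\infty$. Assume that there exists $C\ge1$ such that $\mu_j/j\le C\nu_k/k$ for all $1\le j\le k$. Then for all $t>0$, $\overline{\Gamma}_n(Ct)\le\underline{\Gamma}_m(t)$.
   Context: A weight sequence is given by an increasing sequence $1=\mu_0\le\mu_1\le\mu_2\le\cdots$ via $M_k=\mu_0\mu_1\cdots\mu_k=k!\,m_k$, with $M_k^{1/k}\to\infty$; analogously $\nu\leftrightarrow N\leftrightarrow n$. For a positive sequence $m$ with $m_0=1$ and $m_k^{1/k}\to\infty$ define $h_m(t)=\inf_{k\in\mathbb{N}}m_kt^k$ ($t>0$), $\overline{\Gamma}_m(t)=\min\{k: h_m(t)=m_kt^k\}$, and, if $m_{k+1}/m_k\to\infty$, $\underline{\Gamma}_m(t)=\min\{k: m_{k+1}/m_k\ge 1/t\}$. (Under the hypotheses, $m_{k+1}/m_k=\mu_{k+1}/(k+1)\to\infty$, so these are well defined.) *)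

theory Defs
  imports Complex_Main
begin

definition Mseq :: "(nat \<Rightarrow> real) \<Rightarrow> nat \<Rightarrow> real" where
  "Mseq \<mu> k = (\<Prod>i\<in>{0..k}. \<mu> i)"

definition mseq :: "(nat \<Rightarrow> real) \<Rightarrow> nat \<Rightarrow> real" where
  "mseq \<mu> k = Mseq \<mu> k / fact k"

definition weight_sequence :: "(nat \<Rightarrow> real) \<Rightarrow> bool" where
  "weight_sequence \<mu> \<longleftrightarrow> \<mu> 0 = 1 \<and> mono \<mu> \<and>
     filterlim (\<lambda>k. root k (Mseq \<mu> k)) at_top sequentially"

definition hfun :: "(nat \<Rightarrow> real) \<Rightarrow> real \<Rightarrow> real" where
  "hfun m t = (INF k. m k * t ^ k)"

definition Gamma_bar :: "(nat \<Rightarrow> real) \<Rightarrow> real \<Rightarrow> nat" where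
  "Gamma_bar m t = (LEAST k. hfun m t = m k * t ^ k)"

definition Gamma_under :: "(nat \<Rightarrow> real) \<Rightarrow> real \<Rightarrow> nat" where
  "Gamma_under m t = (LEAST k. m (Suc k) / m k \<ge> 1 / t)"

end

theory Submission
  imports Defs
begin

text \<open>Let K be the lower index of m at t, so that mu(K+1)/(K+1) = m(K+1)/m(K) \<ge> 1/t; such a K
  exists, since otherwise m(k) \<le> t^(-k), contradicting m(k)^(1/k) \<rightarrow> \<infinity>. The comparison hypothesis
  then gives n(k+1)/n(k) = nu(k+1)/(k+1) \<ge> 1/(Ct) for every k \<ge> K, i.e. k \<mapsto> n(k) (Ct)^k is
  nondecreasing from K on, so its infimum h_n(Ct) is attained at an index \<le> K.\<close>

lemma weight_sequence_ge_1:
  assumes "weight_sequence \<mu>"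
  shows "\<mu> i \<ge> 1"
  using assms unfolding weight_sequence_def by (metis le0 monoD)

lemma mseq_pos:
  assumes "weight_sequence \<mu>"
  shows "mseq \<mu> k > 0"
  unfolding mseq_def Mseq_def using weight_sequence_ge_1[OF assms]
  by (intro divide_pos_pos prod_pos) (auto intro: less_le_trans[OF zero_less_one])

lemma mseq_0:
  assumes "weight_sequence \<mu>"
  shows "mseq \<mu> 0 = 1"
  using assms unfolding mseq_def Mseq_def weight_sequence_def by simp

lemma mseq_Suc: "mseq \<mu> (Suc k) = mseq \<mu> k * (\<mu> (Suc k) / real (Suc k))"
  unfolding mseq_def Mseq_def by (simp add: prod.atLeast0_atMost_Suc field_simps)

lemma exists_quotient_ge_if_root_tendsto_infinity:
  fixes m :: "nat \<Rightarrow> real"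
  assumes pos: "\<And>k. m k > 0" and "m 0 = 1"
    and lim: "filterlim (\<lambda>k. root k (m k)) at_top sequentially"
    and "t > 0"
  shows "\<exists>k. m (Suc k) / m k \<ge> 1 / t"
proof (rule ccontr)
  assume "\<not> ?thesis"
  then have "m (Suc k) / m k < 1 / t" for k
    by (meson not_le)
  then have quotient_lt: "m (Suc k) < m k * (1 / t)" for k
    using pos[of k] by (metis divide_less_eq mult.commute)
  have geometric_bound: "m k \<le> (1 / t) ^ k" for k
  proof (induction k)
    case 0
    then show ?case using \<open>m 0 = 1\<close> by simp
  next
    case (Suc k)
    have "m (Suc k) < m k * (1 / t)" by (rule quotient_lt)
    also have "\<dots> \<le> (1 / t) ^ k * (1 / t)" using Suc \<open>t > 0\<close> by (intro mult_right_mono) auto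
    finally show ?case by (simp add: mult.commute)
  qed
  obtain N where N: "\<And>k. k \<ge> N \<Longrightarrow> root k (m k) \<ge> 1 / t + 1"
    using lim by (auto simp: filterlim_at_top eventually_sequentially)
  have "root (Suc N) (m (Suc N)) \<le> root (Suc N) ((1 / t) ^ Suc N)"
    using geometric_bound[of "Suc N"] pos[of "Suc N"] by (subst real_root_le_iff) auto
  also have "\<dots> = 1 / t" using \<open>t > 0\<close> by (intro real_root_pos2) auto
  finally show False using N[of "Suc N"] by simp
qed

lemma Gamma_under_quotient_ge:
  assumes "\<exists>k. m (Suc k) / m k \<ge> 1 / t"
  shows "m (Suc (Gamma_under m t)) / m (Gamma_under m t) \<ge> 1 / t"
  unfolding Gamma_under_def using assms by (rule LeastI_ex)

lemma Gamma_bar_le_if_nondecreasing_from: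
  fixes m :: "nat \<Rightarrow> real"
  assumes step: "\<And>k. K \<le> k \<Longrightarrow> m k * s ^ k \<le> m (Suc k) * s ^ Suc k"
  shows "Gamma_bar m s \<le> K"
proof -
  define g where "g k = m k * s ^ k" for k
  have tail: "g K \<le> g j" if "K \<le> j" for j
    using that
  proof (induction j rule: dec_induct)
    case (step j)
    then show ?case using assms[of j] unfolding g_def by linarith
  qed simp
  have "Min (g ` {..K}) \<in> g ` {..K}" by (intro Min_in) auto
  then obtain k0 where "k0 \<le> K" and k0: "g k0 = Min (g ` {..K})"
    by (metis atMost_iff imageE)
  have k0_min: "g k0 \<le> g j" for j
  proof (cases "j \<le> K")
    case False
    then have "g k0 \<le> g K" using k0 by simp
    also have "\<dots> \<le> g j" using tail False by simp
    finally show ?thesis .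
  qed (use k0 in simp)
  have "hfun m s = g k0"
    unfolding hfun_def g_def[symmetric] by (rule cInf_eq_minimum) (use k0_min in auto)
  then have "Gamma_bar m s \<le> k0"
    unfolding Gamma_bar_def g_def by (intro Least_le) simp
  with \<open>k0 \<le> K\<close> show ?thesis by simp
qed

theorem lemma3p3:
  fixes \<mu> \<nu> :: "nat \<Rightarrow> real" and C :: real
  assumes "weight_sequence \<mu>" and "weight_sequence \<nu>"
    and "filterlim (\<lambda>k. root k (mseq \<mu> k)) at_top sequentially"
    and "filterlim (\<lambda>k. root k (mseq \<nu> k)) at_top sequentially"
    and "C \<ge> 1"
    and "\<And>j k. 1 \<le> j \<Longrightarrow> j \<le> k \<Longrightarrow> \<mu> j / real j \<le> C * \<nu> k / real k"
  shows "\<forall>t>0. Gamma_bar (mseq \<nu>) (C * t) \<le> Gamma_under (mseq \<mu>) t"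
proof (intro allI impI)
  fix t :: real
  assume "t > 0"
  define K where "K = Gamma_under (mseq \<mu>) t"
  have "mseq \<mu> (Suc K) / mseq \<mu> K \<ge> 1 / t"
    unfolding K_def using mseq_pos mseq_0 assms(1,3) \<open>t > 0\<close>
    by (intro Gamma_under_quotient_ge exists_quotient_ge_if_root_tendsto_infinity) auto
  then have K_quotient: "\<mu> (Suc K) / real (Suc K) \<ge> 1 / t"
    using mseq_pos[OF assms(1), of K] by (simp add: mseq_Suc)
  have "mseq \<nu> k * (C * t) ^ k \<le> mseq \<nu> (Suc k) * (C * t) ^ Suc k" if "K \<le> k" for k
  proof -
    have "1 / t \<le> C * \<nu> (Suc k) / real (Suc k)"
      using K_quotient assms(6)[of "Suc K" "Suc k"] that by simp
    then have "1 \<le> \<nu> (Suc k) / real (Suc k) * (C * t)"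
      using \<open>t > 0\<close> by (simp add: field_simps)
    moreover have "mseq \<nu> k * (C * t) ^ k > 0"
      using mseq_pos[OF assms(2), of k] \<open>t > 0\<close> \<open>C \<ge> 1\<close> by simp
    ultimately have "mseq \<nu> k * (C * t) ^ k * 1
        \<le> mseq \<nu> k * (C * t) ^ k * (\<nu> (Suc k) / real (Suc k) * (C * t))"
      by (intro mult_left_mono) auto
    then show ?thesis by (simp add: mseq_Suc mult_ac)
  qed
  then show "Gamma_bar (mseq \<nu>) (C * t) \<le> Gamma_under (mseq \<mu>) t"
    unfolding K_def[symmetric] by (rule Gamma_bar_le_if_nondecreasing_from)
qed

end
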